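(* Let $C\subseteq\mathbb{R}^d$ be a closed cone and let $\bar z\in C$. Then \[\operatorname{Lsp}(C)+[\bar z]\subseteq\operatorname{Lsp}(T_C(\bar z)).\]
   Context: For a cone $C\subseteq\mathbb{R}^d$, $\operatorname{Lsp}(C)$ denotes the largest linear subspace $L\subseteq\mathbb{R}^d$ such that $C+L\subseteq C$ (this is well defined). For $z\in\mathbb{R}^d$, $[z]=\{\alpha z\mid\alpha\in\mathbb{R}\}$. $T_C(\bar z)=\{w\mid \exists t_k\downarrow 0,\ w_k\to w \text{ with } \bar z+t_kw_k\in C\ \forall k\}$ is the tangent (contingent) cone. *)

theory Defs
  imports "HOL-Analysis.Analysis"
begin

definition Lsp :: "'a::euclidean_space set \<Rightarrow> 'a set" where
  "Lsp C = (GREATEST L. subspace L \<and> (\<forall>x\<in>C. \<forall>l\<in>L. x + l \<in> C))"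

definition line_of :: "'a::euclidean_space \<Rightarrow> 'a set" where
  "line_of z = {\<alpha> *\<^sub>R z | \<alpha>. True}"

definition msum :: "'a::euclidean_space set \<Rightarrow> 'a set \<Rightarrow> 'a set" where
  "msum A B = {a + b | a b. a \<in> A \<and> b \<in> B}"

definition tangent_cone :: "'a::euclidean_space set \<Rightarrow> 'a \<Rightarrow> 'a set" where
  "tangent_cone C z = {w. \<exists>(t::nat \<Rightarrow> real) (ws::nat \<Rightarrow> 'a).
      (\<forall>k. t k > 0) \<and> decseq t \<and> t \<longlonglongrightarrow> 0 \<and> ws \<longlonglongrightarrow> w \<and>
      (\<forall>k. z + t k *\<^sub>R ws k \<in> C)}"

end

theory Submission
  imports Defs
begin

text \<open>Directions of Lsp C can be added to the approximating directions ws k of a tangent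
  vector w, since z + t k (ws k + l) = (z + t k ws k) + t k l.  For the line through z,
  the cone property gives (1 + t a)(z + t ws) = z + t (a z + (1 + t a) ws) \<in> C as soon as
  1 + t a \<ge> 0, which holds eventually because t \<longlonglongrightarrow> 0.\<close>

lemma subspace_Union_translation_subspaces:
  "subspace (\<Union>{L. subspace L \<and> (\<forall>x\<in>C. \<forall>l\<in>L. x + l \<in> C)})" (is "subspace ?M")
proof (rule subspaceI)
  let ?P = "\<lambda>L. subspace L \<and> (\<forall>x\<in>C. \<forall>l\<in>L. x + l \<in> C)"
  have "?P {0}" by (auto simp: subspace_def)
  then show "0 \<in> ?M" by blast
next
  fix x y assume "x \<in> ?M" "y \<in> ?M"
  then obtain L1 L2 where L: "subspace L1" "subspace L2" "x \<in> L1" "y \<in> L2"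
    and inv: "\<forall>u\<in>C. \<forall>l\<in>L1. u + l \<in> C" "\<forall>u\<in>C. \<forall>l\<in>L2. u + l \<in> C"
    by blast
  let ?S = "{a + b |a b. a \<in> L1 \<and> b \<in> L2}"
  have S_sub: "subspace ?S" using L by (intro subspace_sums)
  have S_inv: "\<forall>u\<in>C. \<forall>l\<in>?S. u + l \<in> C"
  proof (intro ballI)
    fix u l assume "u \<in> C" "l \<in> ?S"
    then obtain a b where "l = a + b" "a \<in> L1" "b \<in> L2" by blast
    with inv \<open>u \<in> C\<close> have "(u + a) + b \<in> C" by blast
    then show "u + l \<in> C" by (simp add: \<open>l = a + b\<close> add.assoc)
  qed
  have xy_S: "x + y \<in> ?S" using L by blast
  show "x + y \<in> ?M"
    by (intro xy_S S_sub S_inv UnionI [of ?S] CollectI conjI)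
next
  fix c :: real and x assume "x \<in> ?M"
  then obtain L where "subspace L" "\<forall>u\<in>C. \<forall>l\<in>L. u + l \<in> C" "x \<in> L"
    by blast
  then show "c *\<^sub>R x \<in> ?M"
    by (intro UnionI [of L] CollectI conjI subspace_scale)
qed

lemma Lsp_eq_Union: "Lsp C = \<Union>{L. subspace L \<and> (\<forall>x\<in>C. \<forall>l\<in>L. x + l \<in> C)}"
  unfolding Lsp_def
  by (rule Greatest_equality) (use subspace_Union_translation_subspaces in blast)+

lemma subspace_Lsp: "subspace (Lsp C)"
  using subspace_Union_translation_subspaces by (simp add: Lsp_eq_Union)

lemma Lsp_translate: "x \<in> C \<Longrightarrow> l \<in> Lsp C \<Longrightarrow> x + l \<in> C"
  by (auto simp: Lsp_eq_Union)

lemma subspace_subset_Lsp: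
  "subspace L \<Longrightarrow> (\<And>x l. x \<in> C \<Longrightarrow> l \<in> L \<Longrightarrow> x + l \<in> C) \<Longrightarrow> L \<subseteq> Lsp C"
  by (auto simp: Lsp_eq_Union)

lemma subspace_line_of: "subspace (line_of z)"
  by (auto simp: subspace_def line_of_def scaleR_add_left [symmetric])

lemma subspace_msum: "subspace A \<Longrightarrow> subspace B \<Longrightarrow> subspace (msum A B)"
  unfolding msum_def by (rule subspace_sums)

lemma tangent_coneI:
  assumes "\<And>k. t k > 0" "decseq t" "t \<longlonglongrightarrow> 0" "v \<longlonglongrightarrow> w"
    and "\<And>k. z + t k *\<^sub>R v k \<in> C"
  shows "w \<in> tangent_cone C z"
  unfolding tangent_cone_def
  by (intro CollectI exI [of _ t] exI [of _ v] conjI allI assms)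

lemma tangent_coneI_eventually:
  assumes "\<And>k. t k > 0" "decseq t" "t \<longlonglongrightarrow> 0" "v \<longlonglongrightarrow> w"
    and "\<forall>\<^sub>F k in sequentially. z + t k *\<^sub>R v k \<in> C"
  shows "w \<in> tangent_cone C z"
proof -
  obtain N where N: "\<And>k. k \<ge> N \<Longrightarrow> z + t k *\<^sub>R v k \<in> C"
    using assms(5) by (auto simp: eventually_sequentially)
  have "decseq (\<lambda>k. t (k + N))"
    using assms(2) by (simp add: decseq_def)
  moreover have "(\<lambda>k. t (k + N)) \<longlonglongrightarrow> 0" "(\<lambda>k. v (k + N)) \<longlonglongrightarrow> w"
    using assms(3,4) by (auto intro: LIMSEQ_ignore_initial_segment)
  ultimately show ?thesis
    using assms(1) N by (intro tangent_coneI [of "\<lambda>k. t (k + N)"]) auto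
qed

lemma tangent_cone_add_Lsp:
  assumes "w \<in> tangent_cone C z" "l \<in> Lsp C"
  shows "w + l \<in> tangent_cone C z"
proof -
  obtain t ws where t: "\<And>k. t k > 0" "decseq t" "t \<longlonglongrightarrow> 0" and ws: "ws \<longlonglongrightarrow> w"
    and inC: "\<And>k. z + t k *\<^sub>R ws k \<in> C"
    using assms(1) unfolding tangent_cone_def by blast
  have lim: "(\<lambda>k. ws k + l) \<longlonglongrightarrow> w + l"
    using ws by (intro tendsto_intros)
  have "z + t k *\<^sub>R (ws k + l) \<in> C" for k
    using Lsp_translate [OF inC subspace_scale [OF subspace_Lsp assms(2)]]
    by (simp add: scaleR_add_right add.assoc)
  then show ?thesis
    by (rule tangent_coneI [OF t lim])
qed

lemma tangent_cone_add_line: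
  assumes "cone C" "w \<in> tangent_cone C z"
  shows "w + a *\<^sub>R z \<in> tangent_cone C z"
proof -
  obtain t ws where t: "\<And>k. t k > 0" "decseq t" "t \<longlonglongrightarrow> 0" and ws: "ws \<longlonglongrightarrow> w"
    and inC: "\<And>k. z + t k *\<^sub>R ws k \<in> C"
    using assms(2) unfolding tangent_cone_def by blast
  define v where "v k = a *\<^sub>R z + (1 + t k * a) *\<^sub>R ws k" for k
  have "(\<lambda>k. 1 + t k * a) \<longlonglongrightarrow> 1 + 0 * a"
    using t(3) by (intro tendsto_intros)
  then have "\<forall>\<^sub>F k in sequentially. 1 + t k * a > 0"
    by (simp add: order_tendstoD(1))
  then have "\<forall>\<^sub>F k in sequentially. z + t k *\<^sub>R v k \<in> C"
  proof (rule eventually_mono)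
    fix k assume pos: "1 + t k * a > 0"
    have "z + t k *\<^sub>R v k = (1 + t k * a) *\<^sub>R (z + t k *\<^sub>R ws k)"
      by (simp add: v_def algebra_simps)
    then show "z + t k *\<^sub>R v k \<in> C"
      using assms(1) inC pos by (simp add: cone_def)
  qed
  moreover have "v \<longlonglongrightarrow> a *\<^sub>R z + (1 + 0 * a) *\<^sub>R w"
    unfolding v_def using t(3) ws by (intro tendsto_intros)
  ultimately show ?thesis
    using tangent_coneI_eventually [OF t] by (simp add: add.commute)
qed

theorem lemma2p8:
  fixes C :: "'a::euclidean_space set" and z :: 'a
  assumes "closed C" and "cone C" and "z \<in> C"
  shows "msum (Lsp C) (line_of z) \<subseteq> Lsp (tangent_cone C z)"
proof (rule subspace_subset_Lsp)
  show "subspace (msum (Lsp C) (line_of z))"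
    by (intro subspace_msum subspace_Lsp subspace_line_of)
next
  fix w u assume w: "w \<in> tangent_cone C z" and "u \<in> msum (Lsp C) (line_of z)"
  then obtain l a where u: "u = l + a *\<^sub>R z" and l: "l \<in> Lsp C"
    unfolding msum_def line_of_def by blast
  have "(w + l) + a *\<^sub>R z \<in> tangent_cone C z"
    by (intro tangent_cone_add_line assms(2) tangent_cone_add_Lsp w l)
  then show "w + u \<in> tangent_cone C z"
    by (simp only: u add.assoc)
qed

end
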